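(* Let $n\geq 2$ and $m\geq 1$ be integers, let $K$ be an algebraically closed field, and let $p(x_1,\ldots,x_m)\in K\langle x_1,\ldots,x_m\rangle$ be a polynomial with zero constant term in non-commuting variables. Set $r=\mathrm{ord}(p)$ and suppose that $1<r<n-1$. Then $p(T_n(K))=\{p(u_1,\ldots,u_m): u_1,\ldots,u_m\in T_n(K)\}$ is a dense subset of $T_n(K)^{(r-1)}$ with respect to the Zariski topology.
   Context: $T_n(K)$ denotes the algebra of $n\times n$ upper triangular matrices over $K$. For an integer $t\geq 0$, $T_n(K)^{(t)}$ denotes the set of upper triangular matrices whose $(i,j)$ entries are zero whenever $j-i\leq t$; it is identified with the affine space $K^d$, $d=\frac{(n-r)(n-r+1)}{2}$ when $t=r-1$, via the entries $(i,j)$ with $j-i\geq t+1$, and carries the Zariski topology of that affine space (closed sets are common zero sets of families of commutative polynomials in these coordinates). For a $K$-algebra $\mathcal{A}$ let $\mathcal{T}(\mathcal{A})$ be the set of polynomial identities of $\mathcal{A}$; one has $\mathcal{T}(K)\supset\mathcal{T}(T_2(K))\supset\mathcal{T}(T_3(K))\supset\cdots$, with $T_1(K)=K$. The order $\mathrm{ord}(p)$ of $p$ is the least integer $k\geq 1$ such that $p\in\mathcal{T}(T_k(K))$ but $p\notin\mathcal{T}(T_{k+1}(K))$, and $\mathrm{ord}(p)=0$ if $p\notin\mathcal{T}(K)$. *)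

theory Defs
  imports "Jordan_Normal_Form.Matrix" "HOL-Computational_Algebra.Polynomial"
    "HOL-Library.Poly_Mapping"
begin

definition alg_closed :: "'a::field itself \<Rightarrow> bool" where
  "alg_closed _ \<longleftrightarrow> (\<forall>q :: 'a poly. degree q > 0 \<longrightarrow> (\<exists>x. poly q x = 0))"

definition UT :: "nat \<Rightarrow> 'a::field mat set" where
  "UT n = {A \<in> carrier_mat n n. upper_triangular A}"

definition UT_t :: "nat \<Rightarrow> nat \<Rightarrow> 'a::field mat set" where
  "UT_t n t = {A \<in> carrier_mat n n. \<forall>i<n. \<forall>j<n. j \<le> i + t \<longrightarrow> A $$ (i,j) = 0}"

definition coords :: "nat \<Rightarrow> nat \<Rightarrow> (nat \<times> nat) set" where
  "coords n t = {(i,j). i < n \<and> j < n \<and> i + t + 1 \<le> j}"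

text \<open>Non-commutative polynomials in K<x_0,...,x_(m-1)>: finitely supported
  coefficient functions on words (lists of variable indices < m).\<close>
definition is_ncpoly :: "nat \<Rightarrow> (nat list \<Rightarrow> 'a::field) \<Rightarrow> bool" where
  "is_ncpoly m p \<longleftrightarrow> finite {w. p w \<noteq> 0} \<and> (\<forall>w. p w \<noteq> 0 \<longrightarrow> set w \<subseteq> {..<m})"

definition word_eval :: "nat \<Rightarrow> (nat \<Rightarrow> 'a::field mat) \<Rightarrow> nat list \<Rightarrow> 'a mat" where
  "word_eval n us w = foldr (\<lambda>i M. us i * M) w (1\<^sub>m n)"

definition nc_eval :: "nat \<Rightarrow> (nat list \<Rightarrow> 'a::field) \<Rightarrow> (nat \<Rightarrow> 'a mat) \<Rightarrow> 'a mat" where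
  "nc_eval n p us = mat n n (\<lambda>(i,j). \<Sum>w\<in>{w. p w \<noteq> 0}. p w * word_eval n us w $$ (i,j))"

text \<open>p is a polynomial identity of T_k(K) (T_1(K) = K as 1x1 matrices).\<close>
definition is_PI_UT :: "nat \<Rightarrow> nat \<Rightarrow> (nat list \<Rightarrow> 'a::field) \<Rightarrow> bool" where
  "is_PI_UT m k p \<longleftrightarrow> (\<forall>us. (\<forall>i<m. us i \<in> UT k) \<longrightarrow> nc_eval k p us = 0\<^sub>m k k)"

text \<open>Order of p. (If p is an identity of every T_k, e.g. p = 0, the paper leaves
  ord undefined; we put 0 there, which is excluded by the hypothesis r > 1 anyway.)\<close>
definition ord_p :: "nat \<Rightarrow> (nat list \<Rightarrow> 'a::field) \<Rightarrow> nat" where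
  "ord_p m p = (if \<exists>k\<ge>1. is_PI_UT m k p \<and> \<not> is_PI_UT m (k+1) p
     then (LEAST k. k \<ge> 1 \<and> is_PI_UT m k p \<and> \<not> is_PI_UT m (k+1) p) else 0)"

definition image_UT :: "nat \<Rightarrow> nat \<Rightarrow> (nat list \<Rightarrow> 'a::field) \<Rightarrow> 'a mat set" where
  "image_UT m n p = {nc_eval n p us | us. \<forall>i<m. us i \<in> UT n}"

definition cpoly_in :: "nat \<Rightarrow> nat \<Rightarrow> (((nat \<times> nat) \<Rightarrow>\<^sub>0 nat) \<Rightarrow>\<^sub>0 'a::field) \<Rightarrow> bool" where
  "cpoly_in n t f \<longleftrightarrow> (\<forall>mo \<in> Poly_Mapping.keys f. Poly_Mapping.keys mo \<subseteq> coords n t)"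

definition cpoly_eval :: "(((nat \<times> nat) \<Rightarrow>\<^sub>0 nat) \<Rightarrow>\<^sub>0 'a::field) \<Rightarrow> 'a mat \<Rightarrow> 'a" where
  "cpoly_eval f A = (\<Sum>mo\<in>Poly_Mapping.keys f. Poly_Mapping.lookup f mo * (\<Prod>c\<in>Poly_Mapping.keys mo. A $$ c ^ Poly_Mapping.lookup mo c))"

definition zariski_closed :: "nat \<Rightarrow> nat \<Rightarrow> 'a::field mat set \<Rightarrow> bool" where
  "zariski_closed n t C \<longleftrightarrow> (\<exists>F. (\<forall>f\<in>F. cpoly_in n t f) \<and>
      C = {A \<in> UT_t n t. \<forall>f\<in>F. cpoly_eval f A = (0::'a)})"

definition zariski_dense :: "nat \<Rightarrow> nat \<Rightarrow> 'a::field mat set \<Rightarrow> bool" where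
  "zariski_dense n t S \<longleftrightarrow> S \<subseteq> UT_t n t \<and>
      (\<forall>C. zariski_closed n t C \<and> S \<subseteq> C \<longrightarrow> C = UT_t n t)"

end

theory Submission
  imports Defs "Jordan_Normal_Form.Column_Operations"
begin

text \<open>Since \<open>p\<close> is an identity of \<open>T\<^sub>r(K)\<close>, its values lie in \<open>T\<^sub>n(K)\<^sup>(\<^sup>r\<^sup>-\<^sup>1\<^sup>)\<close>; since it is
  not an identity of \<open>T\<^sub>r\<^sub>+\<^sub>1(K)\<close>, each entry \<open>(i, i + r)\<close> of \<open>p(u\<^sub>1, \<dots>, u\<^sub>m)\<close> is a
  polynomial in the entries of the \<open>u\<^sub>k\<close> that is not identically zero, so over the infinite
  field \<open>K\<close> some value of \<open>p\<close> has its whole \<open>r\<close>-th superdiagonal nonzero. Every matrix of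
  \<open>T\<^sub>n(K)\<^sup>(\<^sup>r\<^sup>-\<^sup>1\<^sup>)\<close> with this property is conjugate, by an invertible upper triangular
  matrix, to the shift matrix with ones at the positions \<open>(i, i + r)\<close>, and the image of \<open>p\<close>
  is stable under such conjugations. Hence the image contains all these matrices, and they
  form a Zariski dense subset of \<open>T\<^sub>n(K)\<^sup>(\<^sup>r\<^sup>-\<^sup>1\<^sup>)\<close>.\<close>

section \<open>Polynomial functions over an infinite field\<close>

definition poly_fun :: "('a::field \<Rightarrow> 'a) \<Rightarrow> bool" where
  "poly_fun f \<longleftrightarrow> (\<exists>q. \<forall>t. f t = poly q t)"

lemma poly_fun_const: "poly_fun (\<lambda>t. c)"
  unfolding poly_fun_def by (intro exI[of _ "[:c:]"]) auto

lemma poly_fun_ident: "poly_fun (\<lambda>t. t)"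
  unfolding poly_fun_def by (intro exI[of _ "[:0, 1:]"]) auto

lemma poly_fun_add: "poly_fun f \<Longrightarrow> poly_fun g \<Longrightarrow> poly_fun (\<lambda>t. f t + g t)"
  unfolding poly_fun_def by (metis poly_add)

lemma poly_fun_mult: "poly_fun f \<Longrightarrow> poly_fun g \<Longrightarrow> poly_fun (\<lambda>t. f t * g t)"
  unfolding poly_fun_def by (metis poly_mult)

lemma poly_fun_power: "poly_fun f \<Longrightarrow> poly_fun (\<lambda>t. f t ^ k)"
  by (induction k) (auto intro: poly_fun_mult poly_fun_const)

lemma poly_fun_sum:
  "(\<And>a. a \<in> A \<Longrightarrow> poly_fun (f a)) \<Longrightarrow> poly_fun (\<lambda>t. \<Sum>a\<in>A. f a t)"
  by (induction A rule: infinite_finite_induct) (auto intro: poly_fun_add poly_fun_const)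

lemma poly_fun_prod:
  "(\<And>a. a \<in> A \<Longrightarrow> poly_fun (f a)) \<Longrightarrow> poly_fun (\<lambda>t. \<Prod>a\<in>A. f a t)"
  by (induction A rule: infinite_finite_induct) (auto intro: poly_fun_mult poly_fun_const)

lemma poly_fun_common_nonroot:
  assumes "infinite (UNIV :: 'a::field set)" and "poly_fun f" "poly_fun (g :: 'a \<Rightarrow> 'a)"
    and "f a \<noteq> 0" "g b \<noteq> 0"
  shows "\<exists>t. f t \<noteq> 0 \<and> g t \<noteq> 0"
proof -
  obtain q1 q2 where q: "\<forall>t. f t = poly q1 t" "\<forall>t. g t = poly q2 t"
    using assms(2,3) by (auto simp: poly_fun_def)
  with assms(4,5) have "q1 * q2 \<noteq> 0" by auto
  then have "finite {t. poly (q1 * q2) t = 0}" by (rule poly_roots_finite)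
  then obtain t where "t \<notin> {t. poly (q1 * q2) t = 0}"
    using ex_new_if_finite[OF assms(1)] by blast
  with q show ?thesis by auto
qed

lemma alg_closed_infinite:
  assumes "alg_closed TYPE('a::field)"
  shows "infinite (UNIV :: 'a set)"
proof
  assume fin: "finite (UNIV :: 'a set)"
  define P :: "'a poly" where "P = (\<Prod>x\<in>UNIV. [:- x, 1:])"
  have "degree P = card (UNIV :: 'a set)"
    unfolding P_def by (subst degree_prod_eq_sum_degree) auto
  with fin have "degree (P + 1) > 0"
    by (simp add: finite_UNIV_card_ge_0 degree_add_eq_left)
  then obtain x where "poly (P + 1) x = 0"
    using assms unfolding alg_closed_def by blast
  moreover have "poly P x = 0"
    unfolding P_def poly_prod using fin by (intro prod_zero) auto
  ultimately show False by simp
qed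

definition separately_poly :: "'c set \<Rightarrow> (('c \<Rightarrow> 'a::field) \<Rightarrow> 'a) \<Rightarrow> bool" where
  "separately_poly I g \<longleftrightarrow> (\<forall>v. \<forall>c\<in>I. poly_fun (\<lambda>t. g (v(c := t))))"

lemma separately_poly_prod:
  "(\<And>i. i \<in> S \<Longrightarrow> separately_poly I (F i)) \<Longrightarrow> separately_poly I (\<lambda>v. \<Prod>i\<in>S. F i v)"
  unfolding separately_poly_def by (auto intro: poly_fun_prod)

lemma separately_poly_common_nonzero:
  assumes inf: "infinite (UNIV :: 'a::field set)" and "finite I"
    and "separately_poly I g" "separately_poly I (h :: ('c \<Rightarrow> 'a) \<Rightarrow> 'a)"
    and "g x \<noteq> 0" "h y \<noteq> 0" "\<forall>c. c \<notin> I \<longrightarrow> x c = y c"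
  shows "\<exists>z. g z \<noteq> 0 \<and> h z \<noteq> 0 \<and> (\<forall>c. c \<notin> I \<longrightarrow> z c = x c)"
  using assms(2-)
proof (induction I arbitrary: x y rule: finite_induct)
  case empty
  then have "x = y" by (intro ext) simp
  with empty show ?case by (intro exI[of _ x]) simp
next
  case (insert c I)
  have poly: "poly_fun (\<lambda>t. g (x(c := t)))" "poly_fun (\<lambda>t. h (y(c := t)))"
    using insert.prems(1,2) by (simp_all add: separately_poly_def)
  have "\<exists>t. g (x(c := t)) \<noteq> 0 \<and> h (y(c := t)) \<noteq> 0"
    by (rule poly_fun_common_nonroot[OF inf poly, where a = "x c" and b = "y c"])
      (use insert.prems(3,4) in simp_all)
  then obtain t where t: "g (x(c := t)) \<noteq> 0" "h (y(c := t)) \<noteq> 0" by (elim exE conjE)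
  have sep: "separately_poly I g" "separately_poly I h"
    using insert.prems(1,2) by (simp_all add: separately_poly_def)
  have "\<forall>c'. c' \<notin> I \<longrightarrow> (x(c := t)) c' = (y(c := t)) c'"
    using insert.prems(5) by simp
  then obtain z where "g z \<noteq> 0" "h z \<noteq> 0" "\<forall>c'. c' \<notin> I \<longrightarrow> z c' = (x(c := t)) c'"
    using insert.IH[OF sep t] by blast
  then show ?case by (intro exI[of _ z]) auto
qed

lemma separately_poly_family_common_nonzero:
  assumes inf: "infinite (UNIV :: 'a::field set)" and "finite I" "finite S"
    and "\<And>i. i \<in> S \<Longrightarrow> separately_poly I (F i :: ('c \<Rightarrow> 'a) \<Rightarrow> 'a)"
    and "\<And>i. i \<in> S \<Longrightarrow> \<exists>x. F i x \<noteq> 0 \<and> (\<forall>c. c \<notin> I \<longrightarrow> x c = x\<^sub>0 c)"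
  shows "\<exists>z. (\<forall>i\<in>S. F i z \<noteq> 0) \<and> (\<forall>c. c \<notin> I \<longrightarrow> z c = x\<^sub>0 c)"
  using assms(3-)
proof (induction S rule: finite_induct)
  case empty
  show ?case by (intro exI[of _ x\<^sub>0]) auto
next
  case (insert j S)
  have "\<exists>x. (\<forall>i\<in>S. F i x \<noteq> 0) \<and> (\<forall>c. c \<notin> I \<longrightarrow> x c = x\<^sub>0 c)"
    using insert.prems by (intro insert.IH) auto
  then obtain x where x: "\<forall>i\<in>S. F i x \<noteq> 0" "\<forall>c. c \<notin> I \<longrightarrow> x c = x\<^sub>0 c" by blast
  obtain y where y: "F j y \<noteq> 0" "\<forall>c. c \<notin> I \<longrightarrow> y c = x\<^sub>0 c"
    using insert.prems(2) by blast
  have sep: "separately_poly I (\<lambda>v. \<Prod>i\<in>S. F i v)" "separately_poly I (F j)"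
    using insert.prems(1) separately_poly_prod[of S I F] by simp_all
  have "(\<Prod>i\<in>S. F i x) \<noteq> 0" using x(1) insert.hyps(1) by simp
  moreover have "\<forall>c. c \<notin> I \<longrightarrow> x c = y c" using x(2) y(2) by simp
  ultimately have "\<exists>z. (\<Prod>i\<in>S. F i z) \<noteq> 0 \<and> F j z \<noteq> 0 \<and> (\<forall>c. c \<notin> I \<longrightarrow> z c = x c)"
    using separately_poly_common_nonzero[OF inf \<open>finite I\<close> sep _ y(1)] by simp
  then obtain z where "(\<Prod>i\<in>S. F i z) \<noteq> 0" "F j z \<noteq> 0" "\<forall>c. c \<notin> I \<longrightarrow> z c = x c"
    by (elim exE conjE)
  then show ?case using insert.hyps(1) x(2) by (intro exI[of _ z]) auto
qed

section \<open>Evaluation on upper triangular matrices\<close>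

lemma index_mult_mat_sum:
  assumes "A \<in> carrier_mat n k" "B \<in> carrier_mat k n'" "i < n" "j < n'"
  shows "(A * B) $$ (i,j) = (\<Sum>l<k. A $$ (i,l) * B $$ (l,j))"
  using assms by (auto simp: scalar_prod_def lessThan_atLeast0 intro!: sum.cong)

lemma UT_carrier: "A \<in> UT n \<Longrightarrow> A \<in> carrier_mat n n"
  by (simp add: UT_def)

lemma UT_below_diag: "A \<in> UT n \<Longrightarrow> j < i \<Longrightarrow> i < n \<Longrightarrow> A $$ (i,j) = 0"
  by (auto simp: UT_def upper_triangular_def)

lemma UT_I:
  "A \<in> carrier_mat n n \<Longrightarrow> (\<And>i j. j < i \<Longrightarrow> i < n \<Longrightarrow> A $$ (i,j) = 0) \<Longrightarrow> A \<in> UT n"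
  by (auto simp: UT_def upper_triangular_def)

lemma UT_one: "1\<^sub>m n \<in> UT n"
  by (auto intro: UT_I)

lemma UT_mult:
  assumes "A \<in> UT n" "B \<in> UT n"
  shows "A * B \<in> UT n"
proof (rule UT_I)
  show "A * B \<in> carrier_mat n n" using assms by (meson UT_carrier mult_carrier_mat)
  fix i j assume "j < i" "i < n"
  have "(A * B) $$ (i,j) = (\<Sum>l<n. A $$ (i,l) * B $$ (l,j))"
    using index_mult_mat_sum[OF UT_carrier[OF assms(1)] UT_carrier[OF assms(2)]] \<open>j < i\<close> \<open>i < n\<close>
    by simp
  also have "\<dots> = 0"
  proof (intro sum.neutral ballI)
    fix l assume "l \<in> {..<n}"
    then show "A $$ (i,l) * B $$ (l,j) = 0"
      using \<open>j < i\<close> \<open>i < n\<close> UT_below_diag[OF assms(1), of l i] UT_below_diag[OF assms(2), of j l]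
      by (cases "l < i") auto
  qed
  finally show "(A * B) $$ (i,j) = 0" .
qed

lemma word_eval_Cons: "word_eval n us (k # w) = us k * word_eval n us w"
  by (simp add: word_eval_def)

lemma word_eval_carrier:
  "(\<And>k. k \<in> set w \<Longrightarrow> us k \<in> carrier_mat n n) \<Longrightarrow> word_eval n us w \<in> carrier_mat n n"
  by (induction w) (auto simp: word_eval_def intro!: mult_carrier_mat)

lemma word_eval_UT: "(\<And>k. k \<in> set w \<Longrightarrow> us k \<in> UT n) \<Longrightarrow> word_eval n us w \<in> UT n"
  by (induction w) (auto simp: word_eval_def UT_one UT_mult)

lemma word_eval_cong:
  "(\<And>k. k \<in> set w \<Longrightarrow> us k = vs k) \<Longrightarrow> word_eval n us w = word_eval n vs w"
  by (induction w) (auto simp: word_eval_def)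

lemma nc_eval_cong:
  assumes "is_ncpoly m p" "\<And>k. k < m \<Longrightarrow> us k = vs k"
  shows "nc_eval n p us = nc_eval n p vs"
proof -
  have "word_eval n us w = word_eval n vs w" if "p w \<noteq> 0" for w
    using assms that by (intro word_eval_cong) (auto simp: is_ncpoly_def)
  then show ?thesis unfolding nc_eval_def by (intro eq_matI) auto
qed

lemma nc_eval_UT:
  assumes "is_ncpoly m p" "\<And>k. k < m \<Longrightarrow> us k \<in> UT n"
  shows "nc_eval n p us \<in> UT n"
proof (rule UT_I)
  fix i j assume "j < i" "i < n"
  have "word_eval n us w $$ (i,j) = 0" if "p w \<noteq> 0" for w
  proof -
    have "word_eval n us w \<in> UT n"
      using assms that by (intro word_eval_UT) (auto simp: is_ncpoly_def)
    then show ?thesis using \<open>j < i\<close> \<open>i < n\<close> by (rule UT_below_diag)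
  qed
  then show "nc_eval n p us $$ (i,j) = 0" using \<open>j < i\<close> \<open>i < n\<close> by (simp add: nc_eval_def)
qed (simp add: nc_eval_def)

definition diag_block :: "nat \<Rightarrow> nat \<Rightarrow> 'a::field mat \<Rightarrow> 'a mat" where
  "diag_block s i A = mat s s (\<lambda>(x,y). A $$ (i + x, i + y))"

definition embed_block :: "nat \<Rightarrow> nat \<Rightarrow> nat \<Rightarrow> 'a::field mat \<Rightarrow> 'a mat" where
  "embed_block n s i A = mat n n (\<lambda>(x,y).
     if i \<le> x \<and> x < i + s \<and> i \<le> y \<and> y < i + s then A $$ (x - i, y - i) else 0)"

lemma diag_block_carrier: "diag_block s i A \<in> carrier_mat s s"
  by (simp add: diag_block_def)

lemma diag_block_UT: "A \<in> UT n \<Longrightarrow> i + s \<le> n \<Longrightarrow> diag_block s i A \<in> UT s"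
  by (auto simp: diag_block_def UT_def upper_triangular_def)

lemma diag_block_one: "i + s \<le> n \<Longrightarrow> diag_block s i (1\<^sub>m n) = 1\<^sub>m s"
  by (intro eq_matI) (auto simp: diag_block_def)

lemma embed_block_UT: "A \<in> UT s \<Longrightarrow> embed_block n s i A \<in> UT n"
  by (auto simp: embed_block_def UT_def upper_triangular_def)

lemma diag_block_embed_block:
  "A \<in> carrier_mat s s \<Longrightarrow> i + s \<le> n \<Longrightarrow> diag_block s i (embed_block n s i A) = A"
  by (intro eq_matI) (auto simp: diag_block_def embed_block_def)

lemma diag_block_mult:
  assumes "A \<in> UT n" "B \<in> UT n" "i + s \<le> n"
  shows "diag_block s i (A * B) = diag_block s i A * diag_block s i B"
proof (rule eq_matI)
  fix x y assume "x < dim_row (diag_block s i A * diag_block s i B)"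
    "y < dim_col (diag_block s i A * diag_block s i B)"
  then have xy: "x < s" "y < s" by (auto simp: diag_block_def)
  let ?f = "\<lambda>l. A $$ (i + x, l) * B $$ (l, i + y)"
  have "diag_block s i (A * B) $$ (x,y) = (\<Sum>l<n. ?f l)"
    using index_mult_mat_sum[OF UT_carrier[OF assms(1)] UT_carrier[OF assms(2)]] assms(3) xy
    by (simp add: diag_block_def)
  also have "\<dots> = (\<Sum>l\<in>{i..<i + s}. ?f l)"
  proof (rule sum.mono_neutral_right)
    show "\<forall>l\<in>{..<n} - {i..<i + s}. ?f l = 0"
    proof
      fix l assume l: "l \<in> {..<n} - {i..<i + s}"
      show "?f l = 0"
      proof (cases "l < i")
        case True
        then show ?thesis using UT_below_diag[OF assms(1), of l "i + x"] assms(3) xy by simp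
      next
        case False
        then show ?thesis using UT_below_diag[OF assms(2), of "i + y" l] l xy by simp
      qed
    qed
  qed (use assms(3) in auto)
  also have "\<dots> = (\<Sum>l<s. ?f (i + l))"
    using sum.atLeastLessThan_shift_0[of ?f i "i + s"] by (simp add: lessThan_atLeast0 comp_def)
  also have "\<dots> = (diag_block s i A * diag_block s i B) $$ (x,y)"
    using index_mult_mat_sum[OF diag_block_carrier[of s i A] diag_block_carrier[of s i B] xy] xy
    by (auto simp: diag_block_def intro!: sum.cong)
  finally show "diag_block s i (A * B) $$ (x,y) = (diag_block s i A * diag_block s i B) $$ (x,y)" .
qed (auto simp: diag_block_def)

lemma word_eval_diag_block:
  assumes "\<And>k. k \<in> set w \<Longrightarrow> us k \<in> UT n" "i + s \<le> n"
  shows "diag_block s i (word_eval n us w) = word_eval s (\<lambda>k. diag_block s i (us k)) w"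
  using assms(1)
proof (induction w)
  case Nil
  then show ?case using assms(2) by (simp add: word_eval_def diag_block_one)
next
  case (Cons k w)
  have "us k \<in> UT n" "word_eval n us w \<in> UT n"
    using Cons.prems by (auto intro: word_eval_UT)
  from diag_block_mult[OF this assms(2)] show ?case
    using Cons by (simp add: word_eval_Cons)
qed

lemma nc_eval_diag_block:
  assumes "is_ncpoly m p" "\<And>k. k < m \<Longrightarrow> us k \<in> UT n" "i + s \<le> n" "x < s" "y < s"
  shows "nc_eval n p us $$ (i + x, i + y) = nc_eval s p (\<lambda>k. diag_block s i (us k)) $$ (x,y)"
proof -
  have "word_eval n us w $$ (i + x, i + y) = word_eval s (\<lambda>k. diag_block s i (us k)) w $$ (x,y)"
    if "p w \<noteq> 0" for w
  proof -
    have "\<And>k. k \<in> set w \<Longrightarrow> us k \<in> UT n" using assms(1,2) that by (auto simp: is_ncpoly_def)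
    then have "diag_block s i (word_eval n us w) = word_eval s (\<lambda>k. diag_block s i (us k)) w"
      using word_eval_diag_block assms(3) by blast
    then show ?thesis using assms(4,5) by (metis diag_block_def case_prod_conv index_mat(1))
  qed
  then show ?thesis using assms by (auto simp: nc_eval_def intro!: sum.cong)
qed

section \<open>Consequences of the order of \<open>p\<close>\<close>

text \<open>An entry at distance less than \<open>r\<close> from the diagonal lies in an \<open>r \<times> r\<close> diagonal
  block, and \<open>p\<close> vanishes on every such block.\<close>

lemma nc_eval_PI_UT_t:
  assumes "is_ncpoly m p" "is_PI_UT m r p" "1 \<le> r" "r \<le> n" "\<And>k. k < m \<Longrightarrow> us k \<in> UT n"
  shows "nc_eval n p us \<in> UT_t n (r - 1)"
  unfolding UT_t_def
proof (intro CollectI conjI allI impI)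
  show "nc_eval n p us \<in> carrier_mat n n" by (simp add: nc_eval_def)
  fix x y assume xy: "x < n" "y < n" "y \<le> x + (r - 1)"
  show "nc_eval n p us $$ (x,y) = 0"
  proof (cases "y < x")
    case True
    then show ?thesis using UT_below_diag[OF nc_eval_UT[OF assms(1,5)]] xy by simp
  next
    case False
    define i where "i = min x (n - r)"
    have i: "i + r \<le> n" "x - i < r" "y - i < r" "x = i + (x - i)" "y = i + (y - i)"
      using xy False assms(3,4) by (auto simp: i_def min_def)
    have "\<And>k. k < m \<Longrightarrow> diag_block r i (us k) \<in> UT r"
      using assms(5) i(1) by (blast intro: diag_block_UT)
    then have "nc_eval r p (\<lambda>k. diag_block r i (us k)) = 0\<^sub>m r r"
      using assms(2) by (simp add: is_PI_UT_def)
    moreover have "nc_eval n p us $$ (x,y) = nc_eval r p (\<lambda>k. diag_block r i (us k)) $$ (x - i, y - i)"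
      using nc_eval_diag_block[OF assms(1,5) i(1-3)] i(4,5) by simp
    ultimately show ?thesis using i(2,3) by simp
  qed
qed

lemma image_UT_subset_UT_t:
  assumes "is_ncpoly m p" "is_PI_UT m r p" "1 \<le> r" "r \<le> n"
  shows "image_UT m n p \<subseteq> UT_t n (r - 1)"
  using nc_eval_PI_UT_t[OF assms] by (auto simp: image_UT_def)

lemma ord_p_PI:
  assumes "r = ord_p m p" "0 < r"
  shows "is_PI_UT m r p" "\<not> is_PI_UT m (r + 1) p"
proof -
  let ?P = "\<lambda>k. k \<ge> 1 \<and> is_PI_UT m k p \<and> \<not> is_PI_UT m (k + 1) p"
  have "\<exists>k. ?P k" using assms by (auto simp: ord_p_def split: if_splits)
  then have "?P (Least ?P)" by (rule LeastI_ex)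
  moreover have "r = Least ?P" using assms \<open>\<exists>k. ?P k\<close> by (simp add: ord_p_def)
  ultimately show "is_PI_UT m r p" "\<not> is_PI_UT m (r + 1) p" by simp_all
qed

text \<open>A nonzero value of \<open>p\<close> on \<open>T\<^sub>r\<^sub>+\<^sub>1(K)\<close> can only sit in the upper right corner.\<close>

lemma not_PI_corner_witness:
  assumes "is_ncpoly m p" "is_PI_UT m r p" "\<not> is_PI_UT m (r + 1) p" "1 \<le> r"
  obtains b where "\<And>k. k < m \<Longrightarrow> b k \<in> UT (r + 1)" "nc_eval (r + 1) p b $$ (0, r) \<noteq> 0"
proof -
  obtain b where b: "\<And>k. k < m \<Longrightarrow> b k \<in> UT (r + 1)" "nc_eval (r + 1) p b \<noteq> 0\<^sub>m (r + 1) (r + 1)"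
    using assms(3) by (auto simp: is_PI_UT_def)
  have "\<exists>x y. x < r + 1 \<and> y < r + 1 \<and> nc_eval (r + 1) p b $$ (x,y) \<noteq> 0"
  proof (rule ccontr)
    assume "\<not> ?thesis"
    then have "nc_eval (r + 1) p b = 0\<^sub>m (r + 1) (r + 1)"
      by (intro eq_matI) (auto simp: nc_eval_def)
    with b(2) show False by contradiction
  qed
  then obtain x y where xy: "x < r + 1" "y < r + 1" "nc_eval (r + 1) p b $$ (x,y) \<noteq> 0"
    by blast
  moreover have "nc_eval (r + 1) p b \<in> UT_t (r + 1) (r - 1)"
    using nc_eval_PI_UT_t[OF assms(1,2,4) _ b(1)] by simp
  ultimately have "x = 0" "y = r" by (fastforce simp: UT_t_def)+
  with b(1) xy(3) show thesis by (intro that) auto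
qed

definition poly_fun_mat :: "nat \<Rightarrow> ('a::field \<Rightarrow> 'a mat) \<Rightarrow> bool" where
  "poly_fun_mat n M \<longleftrightarrow> (\<forall>t. M t \<in> carrier_mat n n) \<and> (\<forall>i<n. \<forall>j<n. poly_fun (\<lambda>t. M t $$ (i,j)))"

lemma poly_fun_mat_one: "poly_fun_mat n (\<lambda>t. 1\<^sub>m n)"
  by (simp add: poly_fun_mat_def poly_fun_const)

lemma poly_fun_mat_mult:
  assumes "poly_fun_mat n M" "poly_fun_mat n M'"
  shows "poly_fun_mat n (\<lambda>t. M t * M' t)"
  unfolding poly_fun_mat_def
proof (intro conjI allI impI)
  show "M t * M' t \<in> carrier_mat n n" for t
    using assms by (meson mult_carrier_mat poly_fun_mat_def)
  fix i j assume "i < n" "j < n"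
  then have "(\<lambda>t. (M t * M' t) $$ (i,j)) = (\<lambda>t. \<Sum>l<n. M t $$ (i,l) * M' t $$ (l,j))"
    using assms by (auto simp: poly_fun_mat_def intro!: ext index_mult_mat_sum)
  moreover have "poly_fun (\<lambda>t. \<Sum>l<n. M t $$ (i,l) * M' t $$ (l,j))"
    using assms \<open>i < n\<close> \<open>j < n\<close> by (auto simp: poly_fun_mat_def intro!: poly_fun_sum poly_fun_mult)
  ultimately show "poly_fun (\<lambda>t. (M t * M' t) $$ (i,j))" by simp
qed

lemma poly_fun_mat_word_eval:
  "(\<And>k. poly_fun_mat n (\<lambda>t. us t k)) \<Longrightarrow> poly_fun_mat n (\<lambda>t. word_eval n (us t) w)"
  by (induction w) (simp_all add: word_eval_def poly_fun_mat_one poly_fun_mat_mult)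

lemma poly_fun_nc_eval:
  assumes "is_ncpoly m p" "\<And>k. poly_fun_mat n (\<lambda>t. us t k)" "i < n" "j < n"
  shows "poly_fun (\<lambda>t. nc_eval n p (us t) $$ (i,j))"
proof -
  have "poly_fun (\<lambda>t. \<Sum>w | p w \<noteq> 0. p w * word_eval n (us t) w $$ (i,j))"
    using poly_fun_mat_word_eval[OF assms(2)] assms(3,4)
    by (auto simp: poly_fun_mat_def intro!: poly_fun_sum poly_fun_mult poly_fun_const)
  then show ?thesis using assms(3,4) by (simp add: nc_eval_def)
qed

definition ut_tuple :: "nat \<Rightarrow> (nat \<times> nat \<times> nat \<Rightarrow> 'a::field) \<Rightarrow> nat \<Rightarrow> 'a mat" where
  "ut_tuple n v k = mat n n (\<lambda>(i,j). if i \<le> j then v (k, i, j) else 0)"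

lemma ut_tuple_UT: "ut_tuple n v k \<in> UT n"
  by (auto simp: ut_tuple_def intro: UT_I)

lemma ut_tuple_eqI:
  assumes "A \<in> UT n" "\<And>i j. i < n \<Longrightarrow> j < n \<Longrightarrow> v (k, i, j) = A $$ (i,j)"
  shows "ut_tuple n v k = A"
  using assms UT_carrier[OF assms(1)] UT_below_diag[OF assms(1)]
  by (intro eq_matI) (auto simp: ut_tuple_def)

lemma separately_poly_nc_eval_ut_tuple:
  assumes "is_ncpoly m p" "i < n" "j < n"
  shows "separately_poly I (\<lambda>v. nc_eval n p (ut_tuple n v) $$ (i,j))"
  unfolding separately_poly_def
proof (intro allI ballI)
  fix v :: "nat \<times> nat \<times> nat \<Rightarrow> 'a" and c
  have "poly_fun (\<lambda>t. if a \<le> b then (v(c := t)) (k, a, b) else 0)" for k a b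
    by (cases "a \<le> b"; cases "(k, a, b) = c") (simp_all add: poly_fun_const poly_fun_ident)
  then have "poly_fun_mat n (\<lambda>t. ut_tuple n (v(c := t)) k)" for k
    by (simp add: poly_fun_mat_def ut_tuple_def)
  then show "poly_fun (\<lambda>t. nc_eval n p (ut_tuple n (v(c := t))) $$ (i,j))"
    using poly_fun_nc_eval[OF assms(1) _ assms(2,3), where us = "\<lambda>t. ut_tuple n (v(c := t))"]
    by blast
qed

text \<open>The entries \<open>(i, i + r)\<close> of \<open>p(u\<^sub>1, \<dots>, u\<^sub>m)\<close> are separately polynomial in the entries
  of the \<open>u\<^sub>k\<close>, and each of them is nonzero somewhere: put the corner witness into the
  diagonal block starting at \<open>i\<close>. Hence they have a common non-root.\<close>

lemma image_UT_meets_superdiag_nonzero: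
  fixes p :: "nat list \<Rightarrow> 'a::field"
  assumes inf: "infinite (UNIV :: 'a set)" and p: "is_ncpoly m p"
    and "is_PI_UT m r p" "\<not> is_PI_UT m (r + 1) p" "1 \<le> r" "r < n"
  obtains A where "A \<in> image_UT m n p" "\<And>i. i + r < n \<Longrightarrow> A $$ (i, i + r) \<noteq> 0"
proof -
  obtain b where b: "\<And>k. k < m \<Longrightarrow> b k \<in> UT (r + 1)" "nc_eval (r + 1) p b $$ (0, r) \<noteq> 0"
    using not_PI_corner_witness[OF p assms(3-5)] by blast
  define F where "F i v = nc_eval n p (ut_tuple n v) $$ (i, i + r)" for i v
  define I where "I = {..<m} \<times> {..<n} \<times> {..<n}"
  have sep: "separately_poly I (F i)" if "i \<in> {..<n - r}" for i
    unfolding F_def using that by (intro separately_poly_nc_eval_ut_tuple[OF p]) auto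
  have wit: "\<exists>v. F i v \<noteq> 0 \<and> (\<forall>c. c \<notin> I \<longrightarrow> v c = 0)" if "i \<in> {..<n - r}" for i
  proof -
    let ?us = "\<lambda>k. embed_block n (r + 1) i (b k)"
    define v where "v = (\<lambda>(k, x, y). if (k, x, y) \<in> I then ?us k $$ (x, y) else 0)"
    have i: "i + (r + 1) \<le> n" using that by auto
    have "ut_tuple n v k = ?us k" if "k < m" for k
      using that b(1) by (intro ut_tuple_eqI embed_block_UT) (auto simp: v_def I_def)
    then have "nc_eval n p (ut_tuple n v) = nc_eval n p ?us"
      by (rule nc_eval_cong[OF p])
    then have "F i v = nc_eval n p ?us $$ (i + 0, i + r)"
      by (simp add: F_def)
    also have "\<dots> = nc_eval (r + 1) p (\<lambda>k. diag_block (r + 1) i (?us k)) $$ (0, r)"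
      using b(1) i by (intro nc_eval_diag_block[OF p]) (auto intro: embed_block_UT)
    also have "nc_eval (r + 1) p (\<lambda>k. diag_block (r + 1) i (?us k)) = nc_eval (r + 1) p b"
      using b(1) i by (intro nc_eval_cong[OF p]) (simp add: diag_block_embed_block UT_carrier)
    finally have "F i v \<noteq> 0" using b(2) by simp
    moreover have "\<forall>c. c \<notin> I \<longrightarrow> v c = 0" by (auto simp: v_def)
    ultimately show ?thesis by blast
  qed
  have "finite I" "finite {..<n - r}" by (simp_all add: I_def)
  then have "\<exists>z. (\<forall>i \<in> {..<n - r}. F i z \<noteq> 0) \<and> (\<forall>c. c \<notin> I \<longrightarrow> z c = 0)"
    by (rule separately_poly_family_common_nonzero[OF inf]) (fact sep wit)+
  then obtain z where "\<forall>i \<in> {..<n - r}. F i z \<noteq> 0" by blast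
  then show thesis
    by (intro that[of "nc_eval n p (ut_tuple n z)"]) (auto simp: image_UT_def F_def ut_tuple_UT)
qed

section \<open>Conjugation by invertible upper triangular matrices\<close>

text \<open>\<open>similar_mat_wit A B P Q\<close> means \<open>A = P * B * Q\<close> with \<open>Q = P\<^sup>-\<^sup>1\<close>.\<close>

definition ut_similar :: "nat \<Rightarrow> 'a::field mat \<Rightarrow> 'a mat \<Rightarrow> bool" where
  "ut_similar n A B \<longleftrightarrow> (\<exists>P Q. P \<in> UT n \<and> Q \<in> UT n \<and> similar_mat_wit A B P Q)"

lemma ut_similar_refl: "A \<in> carrier_mat n n \<Longrightarrow> ut_similar n A A"
  unfolding ut_similar_def using similar_mat_wit_refl UT_one by blast

lemma ut_similar_sym: "ut_similar n A B \<Longrightarrow> ut_similar n B A"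
  unfolding ut_similar_def using similar_mat_wit_sym by blast

lemma ut_similar_trans:
  assumes "ut_similar n A B" "ut_similar n B C"
  shows "ut_similar n A C"
proof -
  obtain P Q P' Q' where "P \<in> UT n" "Q \<in> UT n" "similar_mat_wit A B P Q"
    "P' \<in> UT n" "Q' \<in> UT n" "similar_mat_wit B C P' Q'"
    using assms unfolding ut_similar_def by blast
  then have "P * P' \<in> UT n" "Q' * Q \<in> UT n" "similar_mat_wit A C (P * P') (Q' * Q)"
    by (simp_all add: UT_mult similar_mat_wit_trans)
  then show ?thesis unfolding ut_similar_def by blast
qed

lemma ut_similarE:
  assumes "ut_similar n A B"
  obtains P Q where "P \<in> UT n" "Q \<in> UT n" "P * Q = 1\<^sub>m n" "Q * P = 1\<^sub>m n" "A = P * B * Q"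
proof -
  obtain P Q where PQ: "P \<in> UT n" "Q \<in> UT n" "similar_mat_wit A B P Q"
    using assms unfolding ut_similar_def by blast
  have "P \<in> carrier_mat (dim_row A) (dim_row A)" by (rule similar_mat_witD(6)[OF refl PQ(3)])
  then have "n = dim_row A" using UT_carrier[OF PQ(1)] by (metis carrier_matD(1))
  from similar_mat_witD(1-3)[OF this PQ(3)] show thesis by (rule that[OF PQ(1,2)])
qed

lemma mult_mat_lincomb_left:
  fixes P :: "'a::field mat"
  assumes "P \<in> carrier_mat n n" "\<And>w. w \<in> W \<Longrightarrow> X w \<in> carrier_mat n n"
  shows "P * mat n n (\<lambda>(i,j). \<Sum>w\<in>W. c w * X w $$ (i,j))
       = mat n n (\<lambda>(i,j). \<Sum>w\<in>W. c w * (P * X w) $$ (i,j))"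
proof (rule eq_matI)
  fix i j assume "i < dim_row (mat n n (\<lambda>(i,j). \<Sum>w\<in>W. c w * (P * X w) $$ (i,j)))"
    "j < dim_col (mat n n (\<lambda>(i,j). \<Sum>w\<in>W. c w * (P * X w) $$ (i,j)))"
  then have ij: "i < n" "j < n" by auto
  have "(P * mat n n (\<lambda>(i,j). \<Sum>w\<in>W. c w * X w $$ (i,j))) $$ (i,j)
     = (\<Sum>a<n. P $$ (i,a) * (\<Sum>w\<in>W. c w * X w $$ (a,j)))"
    using ij assms by (subst index_mult_mat_sum[of _ n n _ n]) auto
  also have "\<dots> = (\<Sum>w\<in>W. c w * (\<Sum>a<n. P $$ (i,a) * X w $$ (a,j)))"
    by (simp add: sum_distrib_left mult.left_commute sum.swap[of _ W])
  also have "\<dots> = (\<Sum>w\<in>W. c w * (P * X w) $$ (i,j))"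
    using assms ij by (intro sum.cong refl) (simp add: index_mult_mat_sum[of _ n n _ n])
  finally show "(P * mat n n (\<lambda>(i,j). \<Sum>w\<in>W. c w * X w $$ (i,j))) $$ (i,j)
     = mat n n (\<lambda>(i,j). \<Sum>w\<in>W. c w * (P * X w) $$ (i,j)) $$ (i,j)" using ij by simp
qed (use assms in auto)

lemma mult_mat_lincomb_right:
  fixes Q :: "'a::field mat"
  assumes "Q \<in> carrier_mat n n" "\<And>w. w \<in> W \<Longrightarrow> X w \<in> carrier_mat n n"
  shows "mat n n (\<lambda>(i,j). \<Sum>w\<in>W. c w * X w $$ (i,j)) * Q
       = mat n n (\<lambda>(i,j). \<Sum>w\<in>W. c w * (X w * Q) $$ (i,j))"
proof (rule eq_matI)
  fix i j assume "i < dim_row (mat n n (\<lambda>(i,j). \<Sum>w\<in>W. c w * (X w * Q) $$ (i,j)))"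
    "j < dim_col (mat n n (\<lambda>(i,j). \<Sum>w\<in>W. c w * (X w * Q) $$ (i,j)))"
  then have ij: "i < n" "j < n" by auto
  have "(mat n n (\<lambda>(i,j). \<Sum>w\<in>W. c w * X w $$ (i,j)) * Q) $$ (i,j)
     = (\<Sum>a<n. (\<Sum>w\<in>W. c w * X w $$ (i,a)) * Q $$ (a,j))"
    using ij assms by (subst index_mult_mat_sum[of _ n n _ n]) auto
  also have "\<dots> = (\<Sum>w\<in>W. c w * (\<Sum>a<n. X w $$ (i,a) * Q $$ (a,j)))"
    by (simp add: sum_distrib_left sum_distrib_right mult.assoc sum.swap[of _ W])
  also have "\<dots> = (\<Sum>w\<in>W. c w * (X w * Q) $$ (i,j))"
    using assms ij by (intro sum.cong refl) (simp add: index_mult_mat_sum[of _ n n _ n])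
  finally show "(mat n n (\<lambda>(i,j). \<Sum>w\<in>W. c w * X w $$ (i,j)) * Q) $$ (i,j)
     = mat n n (\<lambda>(i,j). \<Sum>w\<in>W. c w * (X w * Q) $$ (i,j)) $$ (i,j)" using ij by simp
qed (use assms in auto)

lemma word_eval_similar:
  assumes "P \<in> carrier_mat n n" "Q \<in> carrier_mat n n" "P * Q = 1\<^sub>m n" "Q * P = 1\<^sub>m n"
    "\<And>k. k \<in> set w \<Longrightarrow> us k \<in> carrier_mat n n"
  shows "word_eval n (\<lambda>k. P * us k * Q) w = P * word_eval n us w * Q"
  using assms(5)
proof (induction w)
  case Nil
  then show ?case using assms(1-3) by (simp add: word_eval_def)
next
  case (Cons k w)
  let ?W = "word_eval n us w"
  have W: "?W \<in> carrier_mat n n" "us k \<in> carrier_mat n n"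
    using Cons.prems by (auto intro: word_eval_carrier)
  have "word_eval n (\<lambda>k. P * us k * Q) (k # w) = (P * us k * Q) * (P * ?W * Q)"
    using Cons by (simp add: word_eval_Cons)
  also have "\<dots> = P * us k * (Q * P) * ?W * Q"
    using assms(1,2) W by (simp add: assoc_mult_mat[of _ n n _ n _ n] mult_carrier_mat)
  also have "\<dots> = P * word_eval n us (k # w) * Q"
    using assms(1,2,4) W by (simp add: word_eval_Cons assoc_mult_mat[of _ n n _ n _ n] mult_carrier_mat)
  finally show ?case .
qed

lemma nc_eval_similar:
  assumes "is_ncpoly m p" "\<And>k. k < m \<Longrightarrow> us k \<in> carrier_mat n n"
    "P \<in> carrier_mat n n" "Q \<in> carrier_mat n n" "P * Q = 1\<^sub>m n" "Q * P = 1\<^sub>m n"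
  shows "nc_eval n p (\<lambda>k. P * us k * Q) = P * nc_eval n p us * Q"
proof -
  let ?W = "{w. p w \<noteq> 0}"
  have carrier: "word_eval n us w \<in> carrier_mat n n" if "w \<in> ?W" for w
    using assms that by (auto intro!: word_eval_carrier simp: is_ncpoly_def)
  have "P * nc_eval n p us * Q
     = mat n n (\<lambda>(i,j). \<Sum>w\<in>?W. p w * (P * word_eval n us w * Q) $$ (i,j))"
    unfolding nc_eval_def
    using mult_mat_lincomb_left[OF assms(3), where X = "word_eval n us" and W = ?W and c = p]
      mult_mat_lincomb_right[OF assms(4), where X = "\<lambda>w. P * word_eval n us w" and W = ?W and c = p]
      carrier assms(3)
    by simp
  also have "\<dots> = nc_eval n p (\<lambda>k. P * us k * Q)"
  proof -
    have "word_eval n (\<lambda>k. P * us k * Q) w = P * word_eval n us w * Q" if "w \<in> ?W" for w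
      using assms that by (intro word_eval_similar) (auto simp: is_ncpoly_def)
    then show ?thesis unfolding nc_eval_def by (intro eq_matI) auto
  qed
  finally show ?thesis by simp
qed

lemma image_UT_ut_similar:
  assumes "is_ncpoly m p" "A \<in> image_UT m n p" "ut_similar n B A"
  shows "B \<in> image_UT m n p"
proof -
  obtain us where us: "\<And>k. k < m \<Longrightarrow> us k \<in> UT n" "A = nc_eval n p us"
    using assms(2) unfolding image_UT_def by blast
  obtain P Q where PQ: "P \<in> UT n" "Q \<in> UT n" "P * Q = 1\<^sub>m n" "Q * P = 1\<^sub>m n" "B = P * A * Q"
    using assms(3) by (rule ut_similarE)
  have "\<And>k. k < m \<Longrightarrow> us k \<in> carrier_mat n n" using us(1) UT_carrier by blast
  from nc_eval_similar[OF assms(1) this UT_carrier[OF PQ(1)] UT_carrier[OF PQ(2)] PQ(3,4)]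
  have "B = nc_eval n p (\<lambda>k. P * us k * Q)" using us(2) PQ(5) by simp
  moreover have "\<And>k. k < m \<Longrightarrow> P * us k * Q \<in> UT n"
    using UT_mult us(1) PQ(1,2) by blast
  ultimately show ?thesis by (auto simp: image_UT_def)
qed

section \<open>Normal form of matrices with nonzero \<open>r\<close>-th superdiagonal\<close>

lemma ut_similar_add_col_sub_row:
  assumes "A \<in> carrier_mat n n" "k < l" "l < n"
  shows "ut_similar n (add_col_sub_row a k l A) A"
proof -
  let ?P = "addrow_mat n (- a) k l" and ?Q = "addrow_mat n a k l"
  have "addrow_mat n c k l \<in> UT n" for c
    by (rule UT_I) (use assms(2) in auto)
  then have UT: "?P \<in> UT n" "?Q \<in> UT n" by blast+
  have "?Q * ?P = 1\<^sub>m n" "?P * ?Q = 1\<^sub>m n"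
    using addrow_mat_inv[of k n l a] addrow_mat_inv[of k n l "- a"] assms(2,3) by simp_all
  moreover have "add_col_sub_row a k l A = ?P * A * ?Q"
  proof -
    have "add_col_sub_row a k l A = ?P * (A * ?Q)"
      unfolding add_col_sub_row_def addcol_mat[OF assms(1) order.strict_trans[OF assms(2,3)]]
      using assms(1,3) by (intro addrow_mat) auto
    then show ?thesis using assms(1) by (simp add: assoc_mult_mat[of _ n n _ n _ n])
  qed
  ultimately have "similar_mat_wit (add_col_sub_row a k l A) A ?P ?Q"
    using assms(1) by (intro similar_mat_witI) auto
  with UT show ?thesis unfolding ut_similar_def by blast
qed

lemma add_col_sub_row_index_ut:
  assumes "A \<in> carrier_mat n n" "i < n" "j < n" "l < n" "A $$ (l, k) = 0"
  shows "add_col_sub_row a k l A $$ (i,j) =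
    A $$ (i,j) - (if i = k then a * A $$ (l,j) else 0) + (if j = l then a * A $$ (i,k) else 0)"
  using assms by (auto simp: algebra_simps)

lemma ut_similar_diag_scaling:
  assumes "A \<in> carrier_mat n n" "\<And>i. d i \<noteq> 0"
  shows "ut_similar n (mat n n (\<lambda>(i,j). d i * A $$ (i,j) / d j)) A"
proof -
  let ?P = "mat_diag n d" and ?Q = "mat_diag n (\<lambda>i. inverse (d i))"
  have UT: "?P \<in> UT n" "?Q \<in> UT n" by (auto simp: mat_diag_def intro: UT_I)
  have "(\<lambda>i. d i * inverse (d i)) = (\<lambda>i. 1)" "(\<lambda>i. inverse (d i) * d i) = (\<lambda>i. 1)"
    using assms(2) by auto
  then have "?P * ?Q = 1\<^sub>m n" "?Q * ?P = 1\<^sub>m n" by simp_all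
  moreover have "?P * A * ?Q = mat n n (\<lambda>(i,j). d i * A $$ (i,j) / d j)"
    using mat_diag_mult_left[OF assms(1), of d]
      mat_diag_mult_right[of "mat n n (\<lambda>(i,j). d i * A $$ (i,j))" n n "\<lambda>i. inverse (d i)"]
    by (auto simp: divide_inverse intro!: eq_matI)
  ultimately have "similar_mat_wit (mat n n (\<lambda>(i,j). d i * A $$ (i,j) / d j)) A ?P ?Q"
    using assms(1) by (intro similar_mat_witI) auto
  with UT show ?thesis unfolding ut_similar_def by blast
qed

definition superdiag_nonzero :: "nat \<Rightarrow> nat \<Rightarrow> 'a::field mat set" where
  "superdiag_nonzero n r = {A \<in> UT_t n (r - 1). \<forall>i. i + r < n \<longrightarrow> A $$ (i, i + r) \<noteq> 0}"

definition band_cleared :: "nat \<Rightarrow> nat \<Rightarrow> nat \<Rightarrow> 'a::field mat \<Rightarrow> bool" where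
  "band_cleared n r \<delta> A \<longleftrightarrow>
     (\<forall>i j. i < n \<longrightarrow> j < n \<longrightarrow> i + r < j \<longrightarrow> j \<le> i + r + \<delta> \<longrightarrow> A $$ (i,j) = 0)"

lemma superdiag_nonzero_carrier: "A \<in> superdiag_nonzero n r \<Longrightarrow> A \<in> carrier_mat n n"
  by (simp add: superdiag_nonzero_def UT_t_def)

text \<open>Row \<open>k\<close> plus a multiple of row \<open>l = k + \<delta> + 1\<close>, compensated on column \<open>l\<close>, kills the
  entry \<open>(k, k + r + \<delta> + 1)\<close> against the nonzero pivot \<open>(l, l + r)\<close>. The compensation only
  touches entries at distance at least \<open>r + \<delta> + 1\<close> in rows above \<open>k\<close>, so the entries
  already cleared below row \<open>k\<close> stay zero.\<close>

lemma superdiag_nonzero_clear_entry: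
  assumes r: "1 \<le> r" and A: "A \<in> superdiag_nonzero n r" "band_cleared n r \<delta> A"
    and below: "\<forall>i>k. i + r + Suc \<delta> < n \<longrightarrow> A $$ (i, i + r + Suc \<delta>) = 0"
    and k: "k + r + Suc \<delta> < n"
  obtains A' where "ut_similar n A' A" "A' \<in> superdiag_nonzero n r" "band_cleared n r \<delta> A'"
    "\<forall>i\<ge>k. i + r + Suc \<delta> < n \<longrightarrow> A' $$ (i, i + r + Suc \<delta>) = 0"
proof -
  define l where "l = k + Suc \<delta>"
  define a where "a = A $$ (k, l + r) / A $$ (l, l + r)"
  define A' where "A' = add_col_sub_row a k l A"
  have cA: "A \<in> carrier_mat n n" using A(1) by (rule superdiag_nonzero_carrier)
  have zero: "A $$ (i,j) = 0" if "i < n" "j < n" "j \<le> i + (r - 1)" for i j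
    using A(1) that by (auto simp: superdiag_nonzero_def UT_t_def)
  have "l + r < n" using k by (simp add: l_def)
  then have pivot: "A $$ (l, l + r) \<noteq> 0" using A(1) by (simp add: superdiag_nonzero_def)
  have kl: "k < l" "l < n" using k by (simp_all add: l_def)
  have A': "A' $$ (i,j) =
      A $$ (i,j) - (if i = k then a * A $$ (l,j) else 0) + (if j = l then a * A $$ (i,k) else 0)"
    if "i < n" "j < n" for i j
    unfolding A'_def using that kl r by (intro add_col_sub_row_index_ut[OF cA] zero) auto
  have "ut_similar n A' A" unfolding A'_def using cA kl by (rule ut_similar_add_col_sub_row)
  moreover have "A' \<in> UT_t n (r - 1)"
    using cA zero kl by (auto simp: UT_t_def A'_def A')
  then have "A' \<in> superdiag_nonzero n r"
    using A(1) zero kl r by (auto simp: superdiag_nonzero_def A')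
  moreover have "band_cleared n r \<delta> A'"
    using A(2) zero kl r by (auto simp: band_cleared_def A' l_def)
  moreover have "\<forall>i\<ge>k. i + r + Suc \<delta> < n \<longrightarrow> A' $$ (i, i + r + Suc \<delta>) = 0"
  proof (intro allI impI)
    fix i assume i: "k \<le> i" "i + r + Suc \<delta> < n"
    show "A' $$ (i, i + r + Suc \<delta>) = 0"
    proof (cases "i = k")
      case True
      then show ?thesis using A' i r pivot by (simp add: a_def l_def add_ac)
    next
      case False
      then show ?thesis using A' below i r by (simp add: l_def)
    qed
  qed
  ultimately show thesis by (rule that)
qed

lemma superdiag_nonzero_clear_band_step:
  assumes r: "1 \<le> r" and A: "A \<in> superdiag_nonzero n r" "band_cleared n r \<delta> A"
  obtains A' where "ut_similar n A' A" "A' \<in> superdiag_nonzero n r" "band_cleared n r (Suc \<delta>) A'"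
proof -
  let ?cleared_from = "\<lambda>k A'. \<forall>i\<ge>k. i + r + Suc \<delta> < n \<longrightarrow> A' $$ (i, i + r + Suc \<delta>) = 0"
  let ?P = "\<lambda>k. \<exists>A'. ut_similar n A' A \<and> A' \<in> superdiag_nonzero n r \<and> band_cleared n r \<delta> A' \<and>
    ?cleared_from k A'"
  have "?P 0"
  proof (rule inc_induct[of 0 n])
    show "?P n"
      using A ut_similar_refl[OF superdiag_nonzero_carrier[OF A(1)]] by auto
  next
    fix k assume "k < n" "?P (Suc k)"
    then obtain A' where A': "ut_similar n A' A" "A' \<in> superdiag_nonzero n r" "band_cleared n r \<delta> A'"
      "?cleared_from (Suc k) A'" by blast
    show "?P k"
    proof (cases "k + r + Suc \<delta> < n")
      case True
      from A'(4) have "\<forall>i>k. i + r + Suc \<delta> < n \<longrightarrow> A' $$ (i, i + r + Suc \<delta>) = 0" by auto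
      then obtain A'' where "ut_similar n A'' A'" "A'' \<in> superdiag_nonzero n r"
        "band_cleared n r \<delta> A''" "?cleared_from k A''"
        by (rule superdiag_nonzero_clear_entry[OF r A'(2,3) _ True])
      with A'(1) show ?thesis by (blast intro: ut_similar_trans)
    next
      case False
      then have "?cleared_from k A'" by auto
      with A' show ?thesis by blast
    qed
  qed simp
  then obtain A' where "ut_similar n A' A" "A' \<in> superdiag_nonzero n r" "band_cleared n r \<delta> A'"
    "?cleared_from 0 A'" by blast
  moreover from this(3,4) have "band_cleared n r (Suc \<delta>) A'"
    by (auto simp: band_cleared_def le_Suc_eq)
  ultimately show thesis using that by blast
qed

lemma superdiag_nonzero_clear_band:
  assumes "1 \<le> r" "A \<in> superdiag_nonzero n r"
  obtains A' where "ut_similar n A' A" "A' \<in> superdiag_nonzero n r" "band_cleared n r n A'"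
proof -
  have "\<exists>A'. ut_similar n A' A \<and> A' \<in> superdiag_nonzero n r \<and> band_cleared n r \<delta> A'" for \<delta>
  proof (induction \<delta>)
    case 0
    show ?case using assms(2) ut_similar_refl[OF superdiag_nonzero_carrier[OF assms(2)]]
      by (auto simp: band_cleared_def)
  next
    case (Suc \<delta>)
    then obtain A' where "ut_similar n A' A" "A' \<in> superdiag_nonzero n r" "band_cleared n r \<delta> A'"
      by blast
    with assms(1) show ?case
      by (metis superdiag_nonzero_clear_band_step ut_similar_trans)
  qed
  then show thesis using that by blast
qed

definition shift_mat :: "nat \<Rightarrow> nat \<Rightarrow> 'a::field mat" where
  "shift_mat n r = mat n n (\<lambda>(i,j). if j = i + r then 1 else 0)"

text \<open>The scaling \<open>d\<close> with \<open>d i * A $$ (i, i + r) / d (i + r) = 1\<close>, computed from the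
  bottom of each chain \<open>i, i + r, i + 2 r, \<dots>\<close>.\<close>

function shift_scaling :: "nat \<Rightarrow> nat \<Rightarrow> 'a::field mat \<Rightarrow> nat \<Rightarrow> 'a" where
  "shift_scaling n r A i =
     (if 0 < r \<and> i + r < n then shift_scaling n r A (i + r) / A $$ (i, i + r) else 1)"
  by auto
termination by (relation "measure (\<lambda>(n, r, A, i). n - i)") auto

declare shift_scaling.simps [simp del]

lemma shift_scaling_nonzero: "A \<in> superdiag_nonzero n r \<Longrightarrow> shift_scaling n r A i \<noteq> 0"
proof (induction n r A i rule: shift_scaling.induct)
  case (1 n r A i)
  then show ?case by (subst shift_scaling.simps) (auto simp: superdiag_nonzero_def)
qed

lemma superdiag_nonzero_ut_similar_shift:
  assumes r: "1 \<le> r" and A: "A \<in> superdiag_nonzero n r"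
  shows "ut_similar n (shift_mat n r) A"
proof -
  obtain A' where A': "ut_similar n A' A" "A' \<in> superdiag_nonzero n r" "band_cleared n r n A'"
    using superdiag_nonzero_clear_band[OF r A] by blast
  let ?d = "shift_scaling n r A'"
  have "mat n n (\<lambda>(i,j). ?d i * A' $$ (i,j) / ?d j) = shift_mat n r"
  proof (rule eq_matI)
    fix i j assume "i < dim_row (shift_mat n r :: 'a mat)" "j < dim_col (shift_mat n r :: 'a mat)"
    then have ij: "i < n" "j < n" by (auto simp: shift_mat_def)
    show "mat n n (\<lambda>(i,j). ?d i * A' $$ (i,j) / ?d j) $$ (i,j) = shift_mat n r $$ (i,j)"
    proof (cases "j = i + r")
      case True
      have "A' $$ (i, i + r) \<noteq> 0" using A'(2) True ij by (auto simp: superdiag_nonzero_def)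
      moreover have "?d i = ?d (i + r) / A' $$ (i, i + r)"
        using True ij r by (subst shift_scaling.simps) auto
      ultimately show ?thesis
        using True ij shift_scaling_nonzero[OF A'(2), of "i + r"] by (simp add: shift_mat_def)
    next
      case False
      then have "A' $$ (i,j) = 0"
        using A'(2,3) ij by (cases "j < i + r") (auto simp: superdiag_nonzero_def UT_t_def band_cleared_def)
      then show ?thesis using False ij by (simp add: shift_mat_def)
    qed
  qed (auto simp: shift_mat_def)
  then have "ut_similar n (shift_mat n r) A'"
    using ut_similar_diag_scaling[OF superdiag_nonzero_carrier[OF A'(2)], where d = ?d]
      shift_scaling_nonzero[OF A'(2)] by simp
  then show ?thesis using A'(1) by (rule ut_similar_trans)
qed

lemma superdiag_nonzero_subset_image:
  fixes A :: "'a::field mat"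
  assumes "is_ncpoly m p" "1 \<le> r" "A \<in> image_UT m n p" "A \<in> superdiag_nonzero n r"
  shows "superdiag_nonzero n r \<subseteq> image_UT m n p"
proof
  fix B :: "'a mat" assume "B \<in> superdiag_nonzero n r"
  then have "ut_similar n B (shift_mat n r)"
    using superdiag_nonzero_ut_similar_shift[OF assms(2)] ut_similar_sym by blast
  then have "ut_similar n B A"
    using superdiag_nonzero_ut_similar_shift[OF assms(2,4)] by (rule ut_similar_trans)
  then show "B \<in> image_UT m n p" by (rule image_UT_ut_similar[OF assms(1,3)])
qed

section \<open>Density\<close>

lemma separately_poly_cpoly_eval:
  assumes "cpoly_in n t f"
  shows "separately_poly I (\<lambda>v. cpoly_eval f (mat n n v))"
  unfolding separately_poly_def cpoly_eval_def
proof (intro allI ballI poly_fun_sum poly_fun_mult poly_fun_const poly_fun_prod poly_fun_power)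
  fix v :: "nat \<times> nat \<Rightarrow> 'a" and c mo e
  assume "mo \<in> Poly_Mapping.keys f" "e \<in> Poly_Mapping.keys mo"
  then have "e \<in> coords n t" using assms by (auto simp: cpoly_in_def)
  then obtain i j where e: "e = (i,j)" "i < n" "j < n" by (auto simp: coords_def)
  show "poly_fun (\<lambda>s. mat n n (v(c := s)) $$ e)"
    using e by (cases "e = c") (simp_all add: poly_fun_ident poly_fun_const)
qed

text \<open>Starting from \<open>A\<close>, vary only the entries \<open>(i, i + r)\<close>: the polynomial is nonzero at
  \<open>A\<close>, the product of these entries is nonzero at \<open>A\<close> with these entries replaced by \<open>1\<close>,
  and a common non-root of both lies in \<open>superdiag_nonzero n r\<close>.\<close>

lemma cpoly_eval_nonzero_on_superdiag_nonzero:
  assumes inf: "infinite (UNIV :: 'a::field set)" and r: "1 \<le> r"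
    and f: "cpoly_in n (r - 1) f" and A: "A \<in> UT_t n (r - 1)" and nz: "cpoly_eval f A \<noteq> (0 :: 'a)"
  obtains B where "B \<in> superdiag_nonzero n r" "cpoly_eval f B \<noteq> 0"
proof -
  define I where "I = (\<lambda>i. (i, i + r)) ` {..<n - r}"
  define x where "x = (\<lambda>(i, j). A $$ (i, j))"
  define y where "y = (\<lambda>c. if c \<in> I then 1 else x c)"
  let ?g = "\<lambda>v. cpoly_eval f (mat n n v)"
  let ?h = "\<lambda>v :: nat \<times> nat \<Rightarrow> 'a. \<Prod>i<n - r. v (i, i + r)"
  have "mat n n x = A" using A by (intro eq_matI) (auto simp: x_def UT_t_def)
  then have gx: "?g x \<noteq> 0" using nz by simp
  have hy: "?h y \<noteq> 0" by (simp add: y_def I_def)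
  have sep_g: "separately_poly I ?g" using f by (rule separately_poly_cpoly_eval)
  have sep_h: "separately_poly I ?h"
    unfolding separately_poly_def
  proof (intro allI ballI poly_fun_prod)
    fix v :: "nat \<times> nat \<Rightarrow> 'a" and c i
    show "poly_fun (\<lambda>t. (v(c := t)) (i, i + r))"
      by (cases "(i, i + r) = c") (simp_all add: poly_fun_ident poly_fun_const)
  qed
  have agree: "\<forall>c. c \<notin> I \<longrightarrow> x c = y c" by (simp add: y_def)
  have "finite I" by (simp add: I_def)
  have "\<exists>z. ?g z \<noteq> 0 \<and> ?h z \<noteq> 0 \<and> (\<forall>c. c \<notin> I \<longrightarrow> z c = x c)"
    by (rule separately_poly_common_nonzero[OF inf]) (fact \<open>finite I\<close> sep_g sep_h gx hy agree)+
  then obtain z where z: "?g z \<noteq> 0" "?h z \<noteq> 0" "\<forall>c. c \<notin> I \<longrightarrow> z c = x c"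
    by (elim exE conjE)
  have "z (i, j) = 0" if "i < n" "j < n" "j \<le> i + (r - 1)" for i j
  proof -
    have "(i, j) \<notin> I" using that r by (auto simp: I_def)
    then show ?thesis using z(3) A that by (simp add: x_def UT_t_def)
  qed
  then have "mat n n z \<in> UT_t n (r - 1)" by (simp add: UT_t_def)
  moreover have "z (i, i + r) \<noteq> 0" if "i + r < n" for i
    using z(2) that by (simp add: prod_zero_iff)
  ultimately have "mat n n z \<in> superdiag_nonzero n r" by (simp add: superdiag_nonzero_def)
  from this z(1) show thesis by (rule that)
qed

lemma superdiag_nonzero_dense:
  assumes inf: "infinite (UNIV :: 'a::field set)" and r: "1 \<le> r"
  shows "zariski_dense n (r - 1) (superdiag_nonzero n r :: 'a mat set)"
  unfolding zariski_dense_def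
proof (intro conjI allI impI)
  show "superdiag_nonzero n r \<subseteq> UT_t n (r - 1)" by (auto simp: superdiag_nonzero_def)
  fix C :: "'a mat set" assume "zariski_closed n (r - 1) C \<and> superdiag_nonzero n r \<subseteq> C"
  then obtain F where F: "\<forall>f\<in>F. cpoly_in n (r - 1) f"
      "C = {A \<in> UT_t n (r - 1). \<forall>f\<in>F. cpoly_eval f A = 0}"
    and sub: "superdiag_nonzero n r \<subseteq> C"
    by (auto simp: zariski_closed_def)
  have "cpoly_eval f A = 0" if f: "f \<in> F" and A: "A \<in> UT_t n (r - 1)" for f A
  proof (rule ccontr)
    assume nz: "cpoly_eval f A \<noteq> 0"
    have "cpoly_in n (r - 1) f" using F(1) f by blast
    then obtain B where "B \<in> superdiag_nonzero n r" "cpoly_eval f B \<noteq> 0"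
      by (rule cpoly_eval_nonzero_on_superdiag_nonzero[OF inf r _ A nz])
    with F(2) f sub show False by auto
  qed
  then show "C = UT_t n (r - 1)" using F(2) by auto
qed

lemma zariski_dense_mono:
  "zariski_dense n t S \<Longrightarrow> S \<subseteq> T \<Longrightarrow> T \<subseteq> UT_t n t \<Longrightarrow> zariski_dense n t T"
  unfolding zariski_dense_def by blast

theorem theorem1p5:
  fixes p :: "nat list \<Rightarrow> 'a::field" and n m r :: nat
  assumes "alg_closed TYPE('a)"
    and "n \<ge> 2" and "m \<ge> 1"
    and "is_ncpoly m p"
    and "p [] = 0"
    and "r = ord_p m p"
    and "1 < r" and "r < n - 1"
  shows "zariski_dense n (r - 1) (image_UT m n p)"
proof -
  have inf: "infinite (UNIV :: 'a set)" using assms(1) by (rule alg_closed_infinite)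
  have r: "1 \<le> r" "r < n" using assms(7,8) by simp_all
  have PI: "is_PI_UT m r p" "\<not> is_PI_UT m (r + 1) p" using ord_p_PI[OF assms(6)] r(1) by simp_all
  have image: "image_UT m n p \<subseteq> UT_t n (r - 1)"
    using image_UT_subset_UT_t[OF assms(4) PI(1) r(1)] r(2) by simp
  obtain A where A: "A \<in> image_UT m n p" "\<And>i. i + r < n \<Longrightarrow> A $$ (i, i + r) \<noteq> 0"
    using image_UT_meets_superdiag_nonzero[OF inf assms(4) PI r] by blast
  with image have "A \<in> superdiag_nonzero n r" by (auto simp: superdiag_nonzero_def)
  with A(1) have "superdiag_nonzero n r \<subseteq> image_UT m n p"
    by (intro superdiag_nonzero_subset_image[OF assms(4) r(1)])
  with superdiag_nonzero_dense[OF inf r(1)] show ?thesis using image by (rule zariski_dense_mono)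
qed

end
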